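(* Let $\Phi$ be a real $N \times d$ matrix satisfying the Restricted Isometry Condition with parameters $(2n, \varepsilon)$ for $\varepsilon = 0.03/\sqrt{\log n}$. Let $v \neq 0$ be an $n$-sparse vector in $\mathbb{R}^d$ and $x = \Phi v$. Then at any iteration of ROMP run on input $x$ and sparsity level $n$, after the regularization step, the newly selected set $J_0$ satisfies $J_0 \neq \emptyset$, $J_0 \cap I = \emptyset$ (where $I$ is the index set at the start of that iteration), and $$|J_0 \cap \mathrm{supp}(v)| \ge \tfrac{1}{2}|J_0|.$$
   Context: A vector $v \in \mathbb{R}^d$ is $n$-sparse if $|\mathrm{supp}(v)| \le n$. A matrix $\Phi$ satisfies the Restricted Isometry Condition with parameters $(m,\varepsilon)$, $\varepsilon\in(0,1)$, if $(1-\varepsilon)\|w\|_2 \le \|\Phi w\|_2 \le (1+\varepsilon)\|w\|_2$ for all $m$-sparse $w$. For a vector $y$, $y|_T$ denotes its restriction to the coordinates in $T$. ROMP with input $x \in \mathbb{R}^N$ and sparsity level $n$: Initialize $I = \emptyset$, $r = x$. Repeat until $r = 0$: (Identify) let $u = \Phi^* r$ and choose a set $J$ of the $n$ biggest coordinates of $u$ in magnitude, or all nonzero coordinates of $u$, whichever set is smaller; (Regularize) among all subsets $J_0 \subset J$ with $|u(i)| \le 2|u(j)|$ for all $i,j\in J_0$, choose one maximizing $\|u|_{J_0}\|_2$; (Update) $I \leftarrow I \cup J_0$, $y = \operatorname{argmin}_{z \in \mathbb{R}^I}\|x - \Phi z\|_2$, $r = x - \Phi y$. Output $I$. *)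

theory Defs
  imports "HOL-Analysis.Analysis"
begin

text \<open>Vectors in R^d are modelled as real^'d, an N x d matrix as real^'d^'N.\<close>

definition supp :: "real^'d \<Rightarrow> 'd set" where
  "supp w = {i. w $ i \<noteq> 0}"

definition sparse :: "nat \<Rightarrow> real^'d \<Rightarrow> bool" where
  "sparse m w \<longleftrightarrow> card (supp w) \<le> m"

definition RIC :: "real^'d^'N \<Rightarrow> nat \<Rightarrow> real \<Rightarrow> bool" where
  "RIC \<Phi> m \<epsilon> \<longleftrightarrow> 0 < \<epsilon> \<and> \<epsilon> < 1 \<and>
     (\<forall>w. sparse m w \<longrightarrow>
        (1 - \<epsilon>) * norm w \<le> norm (\<Phi> *v w) \<and> norm (\<Phi> *v w) \<le> (1 + \<epsilon>) * norm w)"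

definition restrict_vec :: "real^'d \<Rightarrow> 'd set \<Rightarrow> real^'d" where
  "restrict_vec y T = (\<chi> i. if i \<in> T then y $ i else 0)"

definition romp_identify :: "real^'d \<Rightarrow> nat \<Rightarrow> 'd set \<Rightarrow> bool" where
  "romp_identify u n J \<longleftrightarrow>
     (if card (supp u) \<le> n then J = supp u
      else card J = n \<and> (\<forall>i\<in>J. \<forall>j. j \<notin> J \<longrightarrow> \<bar>u $ j\<bar> \<le> \<bar>u $ i\<bar>))"

definition comparable_set :: "real^'d \<Rightarrow> 'd set \<Rightarrow> bool" where
  "comparable_set u J0 \<longleftrightarrow> (\<forall>i\<in>J0. \<forall>j\<in>J0. \<bar>u $ i\<bar> \<le> 2 * \<bar>u $ j\<bar>)"

definition romp_regularize :: "real^'d \<Rightarrow> 'd set \<Rightarrow> 'd set \<Rightarrow> bool" where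
  "romp_regularize u J J0 \<longleftrightarrow> J0 \<subseteq> J \<and> comparable_set u J0 \<and>
     (\<forall>K. K \<subseteq> J \<and> comparable_set u K \<longrightarrow>
        norm (restrict_vec u K) \<le> norm (restrict_vec u J0))"

definition ls_solution :: "real^'d^'N \<Rightarrow> real^'N \<Rightarrow> 'd set \<Rightarrow> real^'d \<Rightarrow> bool" where
  "ls_solution \<Phi> x I y \<longleftrightarrow> supp y \<subseteq> I \<and>
     (\<forall>z. supp z \<subseteq> I \<longrightarrow> norm (x - \<Phi> *v y) \<le> norm (x - \<Phi> *v z))"

text \<open>States (I, r) reachable at the start of some iteration of ROMP on input x
  with sparsity level n (all admissible tie-breaking choices allowed).\<close>
inductive romp_state :: "real^'d^'N \<Rightarrow> real^'N \<Rightarrow> nat \<Rightarrow> 'd set \<Rightarrow> real^'N \<Rightarrow> bool"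
  for \<Phi> x n where
  init: "romp_state \<Phi> x n {} x"
| step: "\<lbrakk> romp_state \<Phi> x n I r; r \<noteq> 0;
           romp_identify (transpose \<Phi> *v r) n J;
           romp_regularize (transpose \<Phi> *v r) J J0;
           ls_solution \<Phi> x (I \<union> J0) y \<rbrakk>
         \<Longrightarrow> romp_state \<Phi> x n (I \<union> J0) (x - \<Phi> *v y)"

end

theory Submission
  imports Defs
begin

text \<open>
  Let \<open>y\<close> be the least squares solution on \<open>I\<close>, so that the residual is \<open>r = \<Phi> w\<close> with
  \<open>w = v - y\<close> supported on \<open>supp v \<union> I\<close>. Inductively at least half of \<open>I\<close> lies in \<open>supp v\<close>, so this
  set has at most \<open>2n\<close> elements and the RIC applies to \<open>w\<close>. The correlation \<open>u = \<Phi>\<^sup>* r\<close> vanishes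
  on \<open>I\<close> and, by the RIC, has energy at least \<open>(1 - \<epsilon>)\<^sup>4 \<parallel>w\<parallel>\<^sup>2\<close> on \<open>supp v - I\<close>; Identify keeps this
  energy in \<open>J\<close>, and splitting \<open>J\<close> into dyadic layers of comparable coordinates shows that Regularize
  keeps a fraction \<open>1/O(log n)\<close> of it in \<open>J\<^sub>0\<close>. So \<open>J\<^sub>0\<close> carries positive energy, hence is nonempty
  and avoids \<open>I\<close>. If more than half of \<open>J\<^sub>0\<close> lay outside \<open>supp v\<close>, comparability would put a fifth of
  its energy on a set \<open>K\<close> disjoint from \<open>supp v \<union> I\<close>, where the near orthogonality of disjointly
  supported vectors under \<open>\<Phi>\<close> bounds it by \<open>16 \<epsilon>\<^sup>2 \<parallel>w\<parallel>\<^sup>2\<close>; for \<open>\<epsilon> = 0.03 / \<surd>log n\<close> the two bounds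
  are incompatible.
\<close>

definition energy :: "real^'d \<Rightarrow> 'd set \<Rightarrow> real" where
  "energy u T = (\<Sum>i\<in>T. (u$i)^2)"

lemma energy_nonneg: "0 \<le> energy u T"
  unfolding energy_def by (simp add: sum_nonneg)

lemma energy_mono: "T \<subseteq> T' \<Longrightarrow> energy u T \<le> energy u T'"
  unfolding energy_def by (rule sum_mono2) auto

lemma energy_Un_disjoint: "T \<inter> T' = {} \<Longrightarrow> energy u (T \<union> T') = energy u T + energy u T'"
  unfolding energy_def by (rule sum.union_disjoint) auto

lemma energy_Int_Diff: "energy u T = energy u (T \<inter> S) + energy u (T - S)"
  by (metis Int_Diff_Un Int_Diff_disjoint energy_Un_disjoint)

lemma energy_empty [simp]: "energy u {} = 0"
  by (simp add: energy_def)

lemma energy_UNIV: "energy u UNIV = (norm u)^2"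
  unfolding energy_def power2_norm_eq_inner inner_vec_def by (simp add: power2_eq_square)

lemma energy_pos_imp_nonzero: "0 < energy u T \<Longrightarrow> \<exists>i\<in>T. u$i \<noteq> 0"
  unfolding energy_def by (metis (mono_tags, lifting) power_zero_numeral sum.neutral less_irrefl)

lemma supp_restrict_vec: "supp (restrict_vec u T) \<subseteq> T"
  unfolding supp_def restrict_vec_def by auto

lemma inner_restrict_vec: "supp z \<subseteq> T \<Longrightarrow> restrict_vec u T \<bullet> z = u \<bullet> z"
  unfolding inner_vec_def restrict_vec_def supp_def by (intro sum.cong) auto

lemma power2_norm_restrict_vec: "(norm (restrict_vec u T))^2 = energy u T"
proof -
  have "(norm (restrict_vec u T))^2 = energy (restrict_vec u T) UNIV"
    by (simp add: energy_UNIV)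
  also have "\<dots> = energy u T"
    unfolding energy_def restrict_vec_def by (rule sum.mono_neutral_cong_right) auto
  finally show ?thesis .
qed

lemma inner_restrict_vec_self: "u \<bullet> restrict_vec u T = energy u T"
  by (metis power2_norm_restrict_vec power2_norm_eq_inner inner_restrict_vec supp_restrict_vec)

lemma norm_restrict_vec_le: "norm (restrict_vec u T) \<le> norm u"
proof -
  have "(norm (restrict_vec u T))^2 \<le> (norm u)^2"
    using energy_mono[of T UNIV u] by (simp add: power2_norm_restrict_vec energy_UNIV)
  then show ?thesis by (rule power2_le_imp_le) simp
qed

lemma energy_le_if_dominated:
  fixes u :: "real^'d"
  assumes "card A \<le> card B" and "0 \<le> c"
    and dom: "\<And>i j. i \<in> A \<Longrightarrow> j \<in> B \<Longrightarrow> (u$i)^2 \<le> c * (u$j)^2"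
  shows "energy u A \<le> c * energy u B"
proof (cases "B = {}")
  case True
  with \<open>card A \<le> card B\<close> show ?thesis by (simp add: energy_def)
next
  case False
  have "real (card B) * energy u A = (\<Sum>i\<in>A. \<Sum>j\<in>B. (u$i)^2)"
    unfolding energy_def by (simp add: sum_distrib_left mult.commute)
  also have "\<dots> \<le> (\<Sum>i\<in>A. \<Sum>j\<in>B. c * (u$j)^2)"
    by (intro sum_mono dom)
  also have "\<dots> = real (card A) * (c * energy u B)"
    unfolding energy_def by (simp add: sum_distrib_left)
  also have "\<dots> \<le> real (card B) * (c * energy u B)"
    using assms by (intro mult_right_mono mult_nonneg_nonneg energy_nonneg) auto
  finally show ?thesis
    using False by (simp add: card_gt_0_iff)
qed

lemma supp_add_subset: "supp (a + b) \<subseteq> supp a \<union> supp b"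
  unfolding supp_def by auto

lemma supp_diff_subset: "supp (a - b) \<subseteq> supp a \<union> supp b"
  unfolding supp_def by auto

lemma supp_scaleR_subset: "supp (c *\<^sub>R a) \<subseteq> supp a"
  unfolding supp_def by auto

lemma inner_eq_0_if_disjoint_supp:
  "supp a \<inter> supp b = {} \<Longrightarrow> a \<bullet> b = 0"
  unfolding inner_vec_def supp_def by (intro sum.neutral) auto

lemma transpose_mult_inner:
  fixes A :: "real^'n^'m"
  shows "(transpose A *v r) \<bullet> z = r \<bullet> (A *v z)"
  by (simp add: dot_lmul_matrix)

lemma RIC_epsilon_bounds: "RIC \<Phi> m \<epsilon> \<Longrightarrow> 0 < \<epsilon> \<and> \<epsilon> < 1"
  unfolding RIC_def by blast

lemma RIC_norm_bounds:
  assumes "RIC \<Phi> m \<epsilon>" "supp w \<subseteq> T" "card T \<le> m"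
  shows "(1 - \<epsilon>) * norm w \<le> norm (\<Phi> *v w)" "norm (\<Phi> *v w) \<le> (1 + \<epsilon>) * norm w"
proof -
  have "sparse m w"
    using card_mono[OF _ assms(2)] assms(3) by (simp add: sparse_def)
  thus "(1 - \<epsilon>) * norm w \<le> norm (\<Phi> *v w)" "norm (\<Phi> *v w) \<le> (1 + \<epsilon>) * norm w"
    using assms(1) unfolding RIC_def by blast+
qed

text \<open>Polarization: \<open>4 \<langle>\<Phi>a, \<Phi>b\<rangle> = \<parallel>\<Phi>(a+b)\<parallel>\<^sup>2 - \<parallel>\<Phi>(a-b)\<parallel>\<^sup>2\<close>, and both \<open>a \<pm> b\<close> have squared norm
  \<open>\<parallel>a\<parallel>\<^sup>2 + \<parallel>b\<parallel>\<^sup>2\<close>.\<close>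
lemma RIC_inner_disjoint_le_sum:
  assumes R: "RIC \<Phi> m \<epsilon>" and a: "supp a \<subseteq> A" and b: "supp b \<subseteq> B"
    and AB: "A \<inter> B = {}" and card: "card A + card B \<le> m"
  shows "\<bar>(\<Phi> *v a) \<bullet> (\<Phi> *v b)\<bar> \<le> \<epsilon> * ((norm a)^2 + (norm b)^2)"
proof -
  have \<epsilon>: "0 < \<epsilon>" "\<epsilon> < 1" using RIC_epsilon_bounds[OF R] by auto
  have card_Un: "card (A \<union> B) \<le> m" using card card_Un_le[of A B] by linarith
  have "a \<bullet> b = 0" using a b AB by (intro inner_eq_0_if_disjoint_supp) blast
  then have s_add: "(norm (a + b))^2 = (norm a)^2 + (norm b)^2"
    and s_diff: "(norm (a - b))^2 = (norm a)^2 + (norm b)^2"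
    by (simp_all add: power2_norm_eq_inner algebra_simps inner_commute)
  define p where "p = norm (\<Phi> *v (a + b))"
  define q where "q = norm (\<Phi> *v (a - b))"
  have p: "(1 - \<epsilon>) * norm (a + b) \<le> p" "p \<le> (1 + \<epsilon>) * norm (a + b)"
    unfolding p_def using supp_add_subset[of a b] a b
    by (intro RIC_norm_bounds[OF R _ card_Un]; blast)+
  have q: "(1 - \<epsilon>) * norm (a - b) \<le> q" "q \<le> (1 + \<epsilon>) * norm (a - b)"
    unfolding q_def using supp_diff_subset[of a b] a b
    by (intro RIC_norm_bounds[OF R _ card_Un]; blast)+
  have "((1 - \<epsilon>) * norm (a + b))^2 \<le> p^2" "p^2 \<le> ((1 + \<epsilon>) * norm (a + b))^2"
    "((1 - \<epsilon>) * norm (a - b))^2 \<le> q^2" "q^2 \<le> ((1 + \<epsilon>) * norm (a - b))^2"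
    using p q \<epsilon> unfolding p_def q_def by (auto intro!: power_mono)
  then have "\<bar>p^2 - q^2\<bar> \<le> 4 * \<epsilon> * ((norm a)^2 + (norm b)^2)"
    using s_add s_diff by (simp add: power2_eq_square algebra_simps)
  moreover have "4 * ((\<Phi> *v a) \<bullet> (\<Phi> *v b)) = p^2 - q^2"
    unfolding p_def q_def power2_norm_eq_inner
    by (simp add: algebra_simps inner_commute)
  ultimately show ?thesis by linarith
qed

lemma RIC_inner_disjoint_le:
  assumes R: "RIC \<Phi> m \<epsilon>" and a: "supp a \<subseteq> A" and b: "supp b \<subseteq> B"
    and AB: "A \<inter> B = {}" and card: "card A + card B \<le> m"
  shows "\<bar>(\<Phi> *v a) \<bullet> (\<Phi> *v b)\<bar> \<le> 2 * \<epsilon> * norm a * norm b"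
proof (cases "a = 0 \<or> b = 0")
  case True
  then show ?thesis by auto
next
  case False
  define t where "t = sqrt (norm b / norm a)"
  have t: "t > 0" "t^2 = norm b / norm a" using False unfolding t_def by auto
  have "\<bar>(\<Phi> *v (t *\<^sub>R a)) \<bullet> (\<Phi> *v ((1/t) *\<^sub>R b))\<bar>
          \<le> \<epsilon> * ((norm (t *\<^sub>R a))^2 + (norm ((1/t) *\<^sub>R b))^2)"
    using a b supp_scaleR_subset by (intro RIC_inner_disjoint_le_sum[OF R _ _ AB card]) blast+
  also have "(\<Phi> *v (t *\<^sub>R a)) \<bullet> (\<Phi> *v ((1/t) *\<^sub>R b)) = (\<Phi> *v a) \<bullet> (\<Phi> *v b)"
    using t by (simp add: matrix_vector_mult_scaleR)
  also have "(norm (t *\<^sub>R a))^2 + (norm ((1/t) *\<^sub>R b))^2 = 2 * norm a * norm b"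
    using t False by (simp add: power2_eq_square field_simps)
  finally show ?thesis by (simp add: mult_ac)
qed

lemma ls_solution_residual_orthogonal:
  assumes L: "ls_solution \<Phi> x I y" and z: "supp z \<subseteq> I"
  shows "(x - \<Phi> *v y) \<bullet> (\<Phi> *v z) = 0"
proof (rule ccontr)
  define r where "r = x - \<Phi> *v y"
  define p where "p = r \<bullet> (\<Phi> *v z)"
  define q where "q = (norm (\<Phi> *v z))^2"
  assume "(x - \<Phi> *v y) \<bullet> (\<Phi> *v z) \<noteq> 0"
  then have p0: "p \<noteq> 0" and q0: "q > 0" unfolding p_def q_def r_def by auto
  define t where "t = p / q"
  have "supp (y + t *\<^sub>R z) \<subseteq> I"
    using L z supp_add_subset[of y "t *\<^sub>R z"] supp_scaleR_subset[of t z]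
    unfolding ls_solution_def by blast
  then have "norm r \<le> norm (x - \<Phi> *v (y + t *\<^sub>R z))"
    using L unfolding ls_solution_def r_def by blast
  also have "x - \<Phi> *v (y + t *\<^sub>R z) = r - t *\<^sub>R (\<Phi> *v z)"
    unfolding r_def by (simp add: algebra_simps)
  finally have "(norm r)^2 \<le> (norm (r - t *\<^sub>R (\<Phi> *v z)))^2"
    by (intro power_mono) auto
  also have "\<dots> = (norm r)^2 - 2 * t * p + t^2 * q"
    unfolding power2_norm_eq_inner p_def q_def
    by (simp add: inner_commute power2_eq_square algebra_simps)
  also have "\<dots> = (norm r)^2 - p^2 / q"
    unfolding t_def using q0 by (simp add: power2_eq_square field_simps)
  finally have "p^2 / q \<le> 0" by simp
  moreover have "0 < p^2 / q" using p0 q0 by simp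
  ultimately show False by simp
qed

lemma ls_solution_correlation_vanishes:
  assumes "ls_solution \<Phi> x I y" "i \<in> I"
  shows "(transpose \<Phi> *v (x - \<Phi> *v y)) $ i = 0"
proof -
  have "supp (axis i 1) \<subseteq> I"
    using assms(2) by (auto simp: supp_def axis_def)
  from ls_solution_residual_orthogonal[OF assms(1) this] show ?thesis
    by (simp flip: transpose_mult_inner add: inner_axis)
qed

lemma romp_identify_card_le: "romp_identify u n J \<Longrightarrow> card J \<le> n"
  unfolding romp_identify_def by (auto split: if_splits)

lemma romp_identify_energy_ge:
  fixes u :: "real^'d"
  assumes Id: "romp_identify u n J" and T: "card T \<le> n"
  shows "energy u T \<le> energy u J"
proof (cases "card (supp u) \<le> n")
  case True
  then have J: "J = supp u" using Id unfolding romp_identify_def by simp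
  have "energy u T = energy u (T \<inter> supp u)"
    unfolding energy_def supp_def by (intro sum.mono_neutral_right) auto
  also have "\<dots> \<le> energy u J"
    unfolding J by (intro energy_mono) auto
  finally show ?thesis .
next
  case False
  then have cJ: "card J = n" and big: "\<And>i j. i \<in> J \<Longrightarrow> j \<notin> J \<Longrightarrow> \<bar>u $ j\<bar> \<le> \<bar>u $ i\<bar>"
    using Id unfolding romp_identify_def by auto
  have "card (T - J) \<le> card (J - T)"
    using T cJ by (simp add: card_Diff_subset_Int Int_commute)
  then have "energy u (T - J) \<le> 1 * energy u (J - T)"
    using big by (intro energy_le_if_dominated) (auto simp: abs_le_square_iff)
  then show ?thesis
    using energy_Int_Diff[of u T J] energy_Int_Diff[of u J T] by (simp add: Int_commute)
qed

lemma romp_regularize_energy_ge: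
  assumes "romp_regularize u J J0" "K \<subseteq> J" "comparable_set u K"
  shows "energy u K \<le> energy u J0"
proof -
  have "norm (restrict_vec u K) \<le> norm (restrict_vec u J0)"
    using assms unfolding romp_regularize_def by blast
  then show ?thesis
    by (metis power2_norm_restrict_vec norm_ge_zero power_mono)
qed

text \<open>The coordinates of \<open>J\<close> whose magnitude lies in \<open>(M / 2\<^sup>k\<^sup>+\<^sup>1, M / 2\<^sup>k]\<close> form a comparable set,
  so each such layer has energy at most that of \<open>J\<^sub>0\<close>.\<close>
lemma romp_regularize_layers_energy_le:
  fixes u :: "real^'d"
  assumes R: "romp_regularize u J J0" and M: "\<And>i. i \<in> J \<Longrightarrow> \<bar>u$i\<bar> \<le> M"
  shows "energy u {i\<in>J. M / 2^L < \<bar>u$i\<bar>} \<le> real L * energy u J0"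
proof (induction L)
  case 0
  have empty: "{i\<in>J. M / 2^0 < \<bar>u$i\<bar>} = {}" using M by force
  show ?case unfolding empty by simp
next
  case (Suc L)
  define layer where "layer = {i\<in>J. M / 2^Suc L < \<bar>u$i\<bar> \<and> \<bar>u$i\<bar> \<le> M / 2^L}"
  have "M / 2^Suc L \<le> M / 2^L" if "i \<in> J" for i
    using M[OF that] by (simp add: divide_simps)
  then have split: "{i\<in>J. M / 2^Suc L < \<bar>u$i\<bar>} = {i\<in>J. M / 2^L < \<bar>u$i\<bar>} \<union> layer"
    unfolding layer_def by force
  have "comparable_set u layer"
    unfolding comparable_set_def layer_def by auto
  then have "energy u layer \<le> energy u J0"
    by (intro romp_regularize_energy_ge[OF R]) (auto simp: layer_def)
  moreover have "{i\<in>J. M / 2^L < \<bar>u$i\<bar>} \<inter> layer = {}"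
    unfolding layer_def by auto
  ultimately show ?case
    unfolding split using Suc.IH by (simp add: energy_Un_disjoint algebra_simps)
qed

text \<open>Below the \<open>(m+1)\<close>-st layer each of the at most \<open>4\<^sup>m\<close> coordinates has square at most
  \<open>M\<^sup>2 / 4\<^sup>m\<^sup>+\<^sup>1\<close>, so the tail carries at most a quarter of the energy of \<open>J\<close>.\<close>
lemma romp_regularize_energy_fraction:
  fixes u :: "real^'d"
  assumes R: "romp_regularize u J J0" and c: "card J \<le> 4^m"
  shows "3 * energy u J \<le> 4 * (real m + 1) * energy u J0"
proof (cases "J = {}")
  case True
  then show ?thesis using energy_nonneg[of u J0] by (simp add: energy_def)
next
  case False
  define M where "M = Max ((\<lambda>i. \<bar>u$i\<bar>) ` J)"
  have M: "\<bar>u$i\<bar> \<le> M" if "i \<in> J" for i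
    unfolding M_def using that by auto
  have "M \<in> (\<lambda>i. \<bar>u$i\<bar>) ` J"
    unfolding M_def using False by (intro Max_in) auto
  then obtain i0 where i0: "i0 \<in> J" "M = \<bar>u$i0\<bar>" by auto
  have M2: "M^2 \<le> energy u J"
    unfolding energy_def using i0 by (auto intro: member_le_sum)
  define L where "L = m + 1"
  define tail where "tail = {i\<in>J. \<not> M / 2^L < \<bar>u$i\<bar>}"
  have "J = {i\<in>J. M / 2^L < \<bar>u$i\<bar>} \<union> tail" "{i\<in>J. M / 2^L < \<bar>u$i\<bar>} \<inter> tail = {}"
    unfolding tail_def by auto
  then have split: "energy u J = energy u {i\<in>J. M / 2^L < \<bar>u$i\<bar>} + energy u tail"
    by (metis energy_Un_disjoint)
  have "energy u tail \<le> real (card tail) * (M / 2^L)^2"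
    unfolding energy_def
  proof (rule sum_bounded_above)
    fix i assume "i \<in> tail"
    then have "\<bar>u$i\<bar> \<le> M / 2^L" unfolding tail_def by auto
    then show "(u$i)^2 \<le> (M / 2^L)^2"
      by (metis abs_ge_zero abs_le_square_iff abs_of_nonneg order_trans)
  qed
  also have "\<dots> \<le> 4^m * (M / 2^L)^2"
    using card_mono[of J tail] c by (intro mult_right_mono) (auto simp: tail_def)
  also have "\<dots> = M^2 / 4"
    unfolding L_def by (simp add: power_divide power2_eq_square flip: power_mult_distrib)
  finally have "energy u tail \<le> energy u J / 4" using M2 by linarith
  moreover have "energy u {i\<in>J. M / 2^L < \<bar>u$i\<bar>} \<le> (real m + 1) * energy u J0"
    using romp_regularize_layers_energy_le[OF R M, of L] by (simp add: L_def add.commute)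
  ultimately have "3 * energy u J \<le> 4 * ((real m + 1) * energy u J0)"
    using split by linarith
  then show ?thesis by (simp only: mult.assoc)
qed

lemma comparable_set_energy_le_outside:
  fixes u :: "real^'d"
  assumes cmp: "comparable_set u J0" and card: "card (J0 \<inter> S) \<le> card (J0 - S)"
  shows "energy u J0 \<le> 5 * energy u (J0 - S)"
proof -
  have "(u$i)^2 \<le> 4 * (u$j)^2" if "i \<in> J0 \<inter> S" "j \<in> J0 - S" for i j
  proof -
    have "\<bar>u$i\<bar> \<le> \<bar>2 * u$j\<bar>" using cmp that unfolding comparable_set_def by (auto simp: abs_mult)
    then show ?thesis by (simp add: abs_le_square_iff power_mult_distrib)
  qed
  then have "energy u (J0 \<inter> S) \<le> 4 * energy u (J0 - S)"
    using card by (intro energy_le_if_dominated) auto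
  then show ?thesis using energy_Int_Diff[of u J0 S] by simp
qed

lemma residual_correlation_energy_ge:
  fixes \<Phi> :: "real^'d^'N"
  assumes R: "RIC \<Phi> m \<epsilon>" and L: "ls_solution \<Phi> (\<Phi> *v v) I y"
    and card: "card (supp v \<union> I) \<le> m"
  shows "(1 - \<epsilon>)^4 * (norm (v - y))^2
           \<le> energy (transpose \<Phi> *v (\<Phi> *v v - \<Phi> *v y)) (supp v - I)"
proof -
  define S0 where "S0 = supp v - I"
  define w where "w = v - y"
  define r where "r = \<Phi> *v w"
  define u where "u = transpose \<Phi> *v r"
  define w0 where "w0 = restrict_vec w S0"
  have \<epsilon>: "0 < \<epsilon>" "\<epsilon> < 1" using RIC_epsilon_bounds[OF R] by auto
  have r: "r = \<Phi> *v v - \<Phi> *v y" unfolding r_def w_def by (simp add: algebra_simps)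
  have w: "supp w \<subseteq> supp v \<union> I"
    using L supp_diff_subset[of v y] unfolding w_def ls_solution_def by blast
  have "supp (w - w0) \<subseteq> I"
    using w unfolding w0_def S0_def supp_def restrict_vec_def by auto
  then have "r \<bullet> (\<Phi> *v (w - w0)) = 0"
    using ls_solution_residual_orthogonal[OF L] r by simp
  then have "(norm r)^2 = u \<bullet> w0"
    unfolding u_def transpose_mult_inner power2_norm_eq_inner
    by (simp add: r_def algebra_simps)
  also have "\<dots> = restrict_vec u S0 \<bullet> w0"
    unfolding w0_def by (simp add: inner_restrict_vec supp_restrict_vec)
  also have "\<dots> \<le> norm (restrict_vec u S0) * norm w"
    using norm_cauchy_schwarz[of "restrict_vec u S0" w0]
      mult_left_mono[OF norm_restrict_vec_le[of w S0] norm_ge_zero[of "restrict_vec u S0"]]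
    unfolding w0_def by linarith
  finally have upper: "(norm r)^2 \<le> norm (restrict_vec u S0) * norm w" .
  have "((1 - \<epsilon>) * norm w)^2 \<le> (norm r)^2"
    using RIC_norm_bounds(1)[OF R w card] \<epsilon> unfolding r_def by (intro power_mono) auto
  with upper have "(1 - \<epsilon>)^2 * norm w * norm w \<le> norm (restrict_vec u S0) * norm w"
    by (simp add: power_mult_distrib power2_eq_square mult_ac)
  then have "(1 - \<epsilon>)^2 * norm w \<le> norm (restrict_vec u S0)"
    by (cases "w = 0") auto
  then have "((1 - \<epsilon>)^2 * norm w)^2 \<le> energy u S0"
    unfolding power2_norm_restrict_vec[symmetric] by (rule power_mono) simp
  then show ?thesis
    unfolding u_def r S0_def w_def by (simp add: power_mult_distrib flip: power_mult)
qed

lemma correlation_energy_off_support_le: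
  fixes \<Phi> :: "real^'d^'N"
  assumes R: "RIC \<Phi> m \<epsilon>" and w: "supp w \<subseteq> A \<union> B" and K: "K \<inter> (A \<union> B) = {}"
    and cardA: "card A + card K \<le> m" and cardB: "card B + card K \<le> m"
  shows "energy (transpose \<Phi> *v (\<Phi> *v w)) K \<le> 16 * \<epsilon>^2 * (norm w)^2"
proof -
  define u where "u = transpose \<Phi> *v (\<Phi> *v w)"
  define b where "b = restrict_vec u K"
  define w1 where "w1 = restrict_vec w A"
  define w2 where "w2 = restrict_vec w (B - A)"
  have \<epsilon>: "0 < \<epsilon>" using RIC_epsilon_bounds[OF R] by auto
  have b: "supp b \<subseteq> K" unfolding b_def by (rule supp_restrict_vec)
  have "w = w1 + w2"
    using w unfolding w1_def w2_def restrict_vec_def supp_def by (auto simp: vec_eq_iff)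
  have "energy u K = (\<Phi> *v w) \<bullet> (\<Phi> *v b)"
    unfolding b_def u_def by (simp flip: inner_restrict_vec_self transpose_mult_inner)
  also have "\<dots> = (\<Phi> *v w1) \<bullet> (\<Phi> *v b) + (\<Phi> *v w2) \<bullet> (\<Phi> *v b)"
    by (simp add: \<open>w = w1 + w2\<close> matrix_vector_right_distrib inner_add_left)
  also have "\<dots> \<le> 2 * \<epsilon> * norm w1 * norm b + 2 * \<epsilon> * norm w2 * norm b"
  proof -
    have "\<bar>(\<Phi> *v w1) \<bullet> (\<Phi> *v b)\<bar> \<le> 2 * \<epsilon> * norm w1 * norm b"
      using K cardA unfolding w1_def by (intro RIC_inner_disjoint_le[OF R supp_restrict_vec b]) auto
    moreover have "\<bar>(\<Phi> *v w2) \<bullet> (\<Phi> *v b)\<bar> \<le> 2 * \<epsilon> * norm w2 * norm b"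
      using K cardB card_mono[of B "B - A"] unfolding w2_def
      by (intro RIC_inner_disjoint_le[OF R supp_restrict_vec b]) auto
    ultimately show ?thesis by linarith
  qed
  also have "\<dots> = 2 * \<epsilon> * norm b * (norm w1 + norm w2)"
    by (simp add: algebra_simps)
  also have "\<dots> \<le> 2 * \<epsilon> * norm b * (2 * norm w)"
    using \<epsilon> norm_restrict_vec_le[of w A] norm_restrict_vec_le[of w "B - A"]
    unfolding w1_def w2_def by (intro mult_left_mono) auto
  finally have "(norm b)^2 \<le> 4 * \<epsilon> * norm w * norm b"
    by (simp add: b_def power2_norm_restrict_vec mult_ac)
  then have "norm b \<le> 4 * \<epsilon> * norm w"
    using \<epsilon> by (cases "b = 0") (auto simp: power2_eq_square)
  then have "(norm b)^2 \<le> (4 * \<epsilon> * norm w)^2"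
    by (intro power_mono) auto
  then show ?thesis
    by (simp add: u_def b_def power2_norm_restrict_vec power_mult_distrib)
qed

lemma ln_2_gt_half: "1/2 < ln (2::real)"
proof -
  have "1 < ln (4::real)" by (rule less_trans[OF ln3_gt_1]) simp
  also have "ln (4::real) = 2 * ln 2" using ln_realpow[of 2 2] by simp
  finally show ?thesis by simp
qed

lemma exists_pow4_ge_exponent_lt_ln:
  assumes "1 \<le> n"
  shows "\<exists>m. n \<le> 4^m \<and> real m < ln (real n) + 1"
proof -
  define m where "m = (LEAST m. n \<le> 4^m)"
  have "n < 2^n" by (rule less_exp)
  also have "(2::nat)^n \<le> 4^n" by (rule power_mono) auto
  finally have n_le: "n \<le> 4^m"
    unfolding m_def by (intro LeastI[where P = "\<lambda>m. n \<le> 4^m" and k = n]) simp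
  have "real m < ln (real n) + 1"
  proof (cases m)
    case 0
    have "0 \<le> ln (real n)" using assms by simp
    then show ?thesis using \<open>m = 0\<close> by simp
  next
    case (Suc k)
    then have "4^k < real n"
      using not_less_Least[of k "\<lambda>m. n \<le> 4^m"] unfolding m_def by fastforce
    then have "ln (4^k) < ln (real n)"
      by (subst ln_less_cancel_iff) auto
    then have "real k * ln 4 < ln (real n)"
      by (simp add: ln_realpow)
    moreover have "real k \<le> real k * ln 4"
      using ln_2_gt_half ln_realpow[of 2 2] by (simp add: mult_le_cancel_left1)
    ultimately show ?thesis
      unfolding Suc of_nat_Suc by linarith
  qed
  with n_le show ?thesis by blast
qed

lemma romp_constant_bound:
  fixes l \<epsilon> :: real
  assumes l: "ln 2 \<le> l" and \<epsilon>: "\<epsilon> = 0.03 / sqrt l" and m: "m < l + 1"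
  shows "320 * (m + 1) * \<epsilon>^2 < 3 * (1 - \<epsilon>)^4"
proof -
  have l12: "1/2 \<le> l" using l ln_2_gt_half by linarith
  have "0.7 \<le> sqrt l" using l12 by (intro real_le_rsqrt) (simp add: power2_eq_square)
  then have "\<epsilon> \<le> 0.03 / 0.7" unfolding \<epsilon> using l12 by (intro divide_left_mono) auto
  then have "(0.95::real)^4 \<le> (1 - \<epsilon>)^4" by (intro power_mono) auto
  then have "2.4 \<le> 3 * (1 - \<epsilon>)^4" by (simp add: power_numeral_reduce)
  have "\<epsilon>^2 = 0.0009 / l" using l12 unfolding \<epsilon> by (simp add: power_divide)
  have "(m + 1) * \<epsilon>^2 \<le> (l + 2) * \<epsilon>^2"
    using m by (intro mult_right_mono) auto
  also have "\<dots> = 0.0009 + 0.0018 / l"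
    using \<open>\<epsilon>^2 = 0.0009 / l\<close> l12 by (simp add: field_simps)
  also have "\<dots> \<le> 0.0045"
    using l12 by (simp add: divide_simps)
  finally show ?thesis
    using \<open>2.4 \<le> 3 * (1 - \<epsilon>)^4\<close> by (simp only: mult.assoc) (simp add: power_numeral_reduce)
qed

text \<open>Since \<open>ln 0 = ln 1 = 0\<close> and \<open>x / 0 = 0\<close>, the RIC hypothesis alone forces \<open>n \<ge> 2\<close>.\<close>
lemma RIC_romp_epsilon_imp_two_le:
  assumes "RIC \<Phi> m (0.03 / sqrt (ln (real n)))"
  shows "2 \<le> n"
proof (rule ccontr)
  assume "\<not> 2 \<le> n"
  then have "ln (real n) = 0" by (cases n) auto
  then show False using RIC_epsilon_bounds[OF assms] by simp
qed

lemma card_Diff_le_if_half_inside: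
  fixes I S :: "'a::finite set"
  assumes "card (I - S) \<le> card (I \<inter> S)" and "card S \<le> n"
  shows "card (I - S) \<le> n"
  using assms card_mono[of S "I \<inter> S"] by fastforce

lemma romp_regularized_energy_ge:
  fixes \<Phi> :: "real^'d^'N" and v y :: "real^'d"
  assumes R: "RIC \<Phi> (2 * n) \<epsilon>" and sp: "sparse n v"
    and L: "ls_solution \<Phi> (\<Phi> *v v) I y" and half_I: "card (I - supp v) \<le> card (I \<inter> supp v)"
    and u: "u = transpose \<Phi> *v (\<Phi> *v v - \<Phi> *v y)"
    and Id: "romp_identify u n J" and Rg: "romp_regularize u J J0" and m: "n \<le> 4^m"
  shows "3 * (1 - \<epsilon>)^4 * (norm (v - y))^2 \<le> 4 * (real m + 1) * energy u J0"
proof -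
  have cS: "card (supp v) \<le> n" using sp unfolding sparse_def .
  have "card (supp v \<union> I) \<le> 2 * n"
    using card_Un_le[of "supp v" "I - supp v"] cS card_Diff_le_if_half_inside[OF half_I cS]
    by simp
  then have "(1 - \<epsilon>)^4 * (norm (v - y))^2 \<le> energy u (supp v - I)"
    using residual_correlation_energy_ge[OF R L] unfolding u by simp
  also have "\<dots> \<le> energy u J"
    using cS card_mono[of "supp v" "supp v - I"] by (intro romp_identify_energy_ge[OF Id]) auto
  finally show ?thesis
    using romp_regularize_energy_fraction[OF Rg, of m] romp_identify_card_le[OF Id] m by linarith
qed

lemma romp_regularized_energy_le_if_half_outside:
  fixes \<Phi> :: "real^'d^'N" and v y :: "real^'d"
  assumes R: "RIC \<Phi> (2 * n) \<epsilon>" and sp: "sparse n v"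
    and L: "ls_solution \<Phi> (\<Phi> *v v) I y" and half_I: "card (I - supp v) \<le> card (I \<inter> supp v)"
    and u: "u = transpose \<Phi> *v (\<Phi> *v v - \<Phi> *v y)"
    and Id: "romp_identify u n J" and Rg: "romp_regularize u J J0"
    and J0I: "J0 \<inter> I = {}" and half_out: "card (J0 \<inter> supp v) \<le> card (J0 - supp v)"
  shows "energy u J0 \<le> 80 * \<epsilon>^2 * (norm (v - y))^2"
proof -
  define S where "S = supp v"
  have cS: "card S \<le> n" using sp unfolding sparse_def S_def .
  have cIS: "card (I - S) \<le> n"
    using card_Diff_le_if_half_inside[OF half_I] cS unfolding S_def .
  have cmp: "comparable_set u J0" and "J0 \<subseteq> J"
    using Rg unfolding romp_regularize_def by auto
  have "energy u J0 \<le> 5 * energy u (J0 - S)"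
    using comparable_set_energy_le_outside[OF cmp] half_out unfolding S_def .
  moreover have "energy u (J0 - S) \<le> 16 * \<epsilon>^2 * (norm (v - y))^2"
    unfolding u matrix_vector_mult_diff_distrib[symmetric]
  proof (rule correlation_energy_off_support_le[OF R])
    show "supp (v - y) \<subseteq> S \<union> (I - S)"
      using L supp_diff_subset[of v y] unfolding ls_solution_def S_def by blast
    show "(J0 - S) \<inter> (S \<union> (I - S)) = {}" using J0I by blast
    have "card (J0 - S) \<le> n"
      using card_mono[of J "J0 - S"] \<open>J0 \<subseteq> J\<close> romp_identify_card_le[OF Id]
      by (meson Diff_subset finite order_trans)
    then show "card S + card (J0 - S) \<le> 2 * n" "card (I - S) + card (J0 - S) \<le> 2 * n"
      using cS cIS by linarith+
  qed
  ultimately show ?thesis by linarith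
qed

lemma romp_iteration:
  fixes \<Phi> :: "real^'d^'N" and v y :: "real^'d"
  assumes R: "RIC \<Phi> (2 * n) \<epsilon>" and \<epsilon>: "\<epsilon> = 0.03 / sqrt (ln (real n))"
    and sp: "sparse n v"
    and L: "ls_solution \<Phi> (\<Phi> *v v) I y" and half_I: "card (I - supp v) \<le> card (I \<inter> supp v)"
    and r0: "\<Phi> *v v - \<Phi> *v y \<noteq> 0" and u: "u = transpose \<Phi> *v (\<Phi> *v v - \<Phi> *v y)"
    and Id: "romp_identify u n J" and Rg: "romp_regularize u J J0"
  shows "J0 \<noteq> {} \<and> J0 \<inter> I = {} \<and> card J0 \<le> 2 * card (J0 \<inter> supp v)"
proof -
  define W where "W = (norm (v - y))^2"
  have W: "0 < W"
    using r0 unfolding W_def by (auto simp: matrix_vector_mult_diff_distrib[symmetric])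
  have n2: "2 \<le> n" using R unfolding \<epsilon> by (rule RIC_romp_epsilon_imp_two_le)
  then obtain m where m: "n \<le> 4^m" "real m < ln (real n) + 1"
    using exists_pow4_ge_exponent_lt_ln[of n] by auto
  have main: "3 * (1 - \<epsilon>)^4 * W \<le> 4 * (real m + 1) * energy u J0"
    using romp_regularized_energy_ge[OF R sp L half_I u Id Rg m(1)] unfolding W_def .
  have "ln 2 \<le> ln (real n)" using n2 by simp
  from romp_constant_bound[OF this \<epsilon> m(2)]
  have const: "320 * (real m + 1) * \<epsilon>^2 * W < 3 * (1 - \<epsilon>)^4 * W"
    using W by (intro mult_strict_right_mono)
  have "0 \<le> 320 * (real m + 1) * \<epsilon>^2 * W" using W by simp
  then have "0 < 4 * (real m + 1) * energy u J0"
    using main const by linarith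
  then have "0 < energy u J0"
    by (simp add: zero_less_mult_iff)
  then obtain j where j: "j \<in> J0" "u$j \<noteq> 0" using energy_pos_imp_nonzero by blast
  have J0I: "J0 \<inter> I = {}"
  proof (rule ccontr)
    assume "J0 \<inter> I \<noteq> {}"
    then obtain i where "i \<in> J0" "i \<in> I" by blast
    then have "\<bar>u$j\<bar> \<le> 2 * \<bar>u$i\<bar>" "u$i = 0"
      using Rg j(1) ls_solution_correlation_vanishes[OF L]
      unfolding romp_regularize_def comparable_set_def u by blast+
    then show False using j(2) by simp
  qed
  have "card J0 \<le> 2 * card (J0 \<inter> supp v)"
  proof (rule ccontr)
    assume "\<not> card J0 \<le> 2 * card (J0 \<inter> supp v)"
    then have "card (J0 \<inter> supp v) \<le> card (J0 - supp v)"
      using card_Int_Diff[of J0 "supp v"] by simp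
    from romp_regularized_energy_le_if_half_outside[OF R sp L half_I u Id Rg J0I this]
    have "4 * (real m + 1) * energy u J0 \<le> 4 * (real m + 1) * (80 * \<epsilon>^2 * W)"
      unfolding W_def by (intro mult_left_mono) auto
    then show False using main const by (simp add: mult_ac)
  qed
  with j J0I show ?thesis by blast
qed

lemma romp_state_invariant:
  fixes \<Phi> :: "real^'d^'N" and v :: "real^'d"
  assumes R: "RIC \<Phi> (2 * n) (0.03 / sqrt (ln (real n)))" and sp: "sparse n v"
    and "romp_state \<Phi> (\<Phi> *v v) n I r"
  shows "\<exists>y. ls_solution \<Phi> (\<Phi> *v v) I y \<and> r = \<Phi> *v v - \<Phi> *v y \<and>
           card (I - supp v) \<le> card (I \<inter> supp v)"
  using assms(3)
proof (induction rule: romp_state.induct)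
  case init
  have "ls_solution \<Phi> (\<Phi> *v v) {} 0"
    unfolding ls_solution_def
  proof (intro conjI allI impI)
    show "supp (0::real^'d) \<subseteq> {}" by (simp add: supp_def)
    fix z :: "real^'d"
    assume "supp z \<subseteq> {}"
    then have "z = 0" by (auto simp: supp_def vec_eq_iff)
    then show "norm (\<Phi> *v v - \<Phi> *v 0) \<le> norm (\<Phi> *v v - \<Phi> *v z)" by simp
  qed
  then show ?case by auto
next
  case (step I r J J0 y)
  define S where "S = supp v"
  from step.IH obtain y0 where y0: "ls_solution \<Phi> (\<Phi> *v v) I y0" "r = \<Phi> *v v - \<Phi> *v y0"
    and half_I: "card (I - S) \<le> card (I \<inter> S)" unfolding S_def by blast
  have J0: "J0 \<inter> I = {}" "card J0 \<le> 2 * card (J0 \<inter> S)"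
    using romp_iteration[OF R refl sp y0(1) _ _ refl] half_I y0(2) step.hyps(2-4)
    unfolding S_def by auto
  have "card ((I \<union> J0) - S) = card (I - S) + card (J0 - S)"
    "card ((I \<union> J0) \<inter> S) = card (I \<inter> S) + card (J0 \<inter> S)"
    "card J0 = card (J0 \<inter> S) + card (J0 - S)"
    using J0(1) card_Int_Diff[of J0 S]
    by (auto simp: Un_Diff Int_Un_distrib2 intro!: card_Un_disjoint)
  then have "card ((I \<union> J0) - S) \<le> card ((I \<union> J0) \<inter> S)"
    using J0(2) half_I by linarith
  then show ?case using step.hyps(5) unfolding S_def by blast
qed

theorem theorem3p1:
  fixes \<Phi> :: "real^'d^'N" and v :: "real^'d" and n :: nat
    and I J J0 :: "'d set" and r :: "real^'N"
  assumes "RIC \<Phi> (2 * n) (0.03 / sqrt (ln (real n)))"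
    and "v \<noteq> 0" and "sparse n v"
    and "romp_state \<Phi> (\<Phi> *v v) n I r" and "r \<noteq> 0"
    and "romp_identify (transpose \<Phi> *v r) n J"
    and "romp_regularize (transpose \<Phi> *v r) J J0"
  shows "J0 \<noteq> {} \<and> J0 \<inter> I = {} \<and> real (card (J0 \<inter> supp v)) \<ge> real (card J0) / 2"
proof -
  obtain y where y: "ls_solution \<Phi> (\<Phi> *v v) I y" "r = \<Phi> *v v - \<Phi> *v y"
    and half_I: "card (I - supp v) \<le> card (I \<inter> supp v)"
    using romp_state_invariant[OF assms(1,3,4)] by blast
  have "J0 \<noteq> {} \<and> J0 \<inter> I = {} \<and> card J0 \<le> 2 * card (J0 \<inter> supp v)"
    using romp_iteration[OF assms(1) refl assms(3) y(1) half_I _ refl] assms(5-7) y(2) by blast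
  then show ?thesis by linarith
qed

end
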